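(* Let $\theta_1,\theta_2\in\Theta$, $\theta_\alpha=\alpha\theta_1+(1-\alpha)\theta_2$, and assume the maximiser $\alpha^*$ of $\alpha\mapsto D^{\mathrm w}_{B,\alpha}(p_{\theta_1},p_{\theta_2})$ over $[0,1]$ exists, is unique and lies in $(0,1)$. Then \[ D_C^{\mathrm w}(p_{\theta_1},p_{\theta_2})=D^{\mathrm w}_{B,\alpha^*}(p_{\theta_1},p_{\theta_2})=\alpha^*F(\theta_1)+(1-\alpha^* )F(\theta_2)-\hat F(\theta_{\alpha^*}), \] $\theta_{\alpha^*}$ satisfies the bisector condition $B^{\mathrm w}_{\varphi,F}(\theta_1,\theta_{\alpha^*})=B^{\mathrm w}_{\varphi,F}(\theta_2,\theta_{\alpha^*})$, and \[ D_C^{\mathrm w}(p_{\theta_1},p_{\theta_2})=\frac{B^{\mathrm w}_{\varphi,F}(\theta_1,\theta_{\alpha^*})}{E_\varphi(\theta_{\alpha^*})}-\ln E_\varphi(\theta_{\alpha^*})=\frac{B^{\mathrm w}_{\varphi,F}(\theta_2,\theta_{\alpha^*})}{E_\varphi(\theta_{\alpha^*})}-\ln E_\varphi(\theta_{\alpha^*}). \]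
   Context: Let $\mu$ be a $\sigma$-finite measure on $\mathcal X$ and $\varphi\ge0$ a measurable weight. Let $\{p_\theta:\theta\in\Theta\}$, $\Theta\subset\mathbb R^d$ open and convex, be a regular exponential family $p_\theta(x)=\exp\{\theta^{\mathrm T}t(x)-F(\theta)+k(x)\}$. Set $E_\varphi(\theta)=\int\varphi p_\theta\,\mathrm d\mu\in(0,\infty)$ and $\hat F(\theta)=\ln\int\varphi(x)e^{\theta^{\mathrm T}t(x)+k(x)}\,\mathrm d\mu(x)=F(\theta)+\ln E_\varphi(\theta)$, finite and differentiable on $\Theta$. Weighted affinity $\rho^{\mathrm w}_\alpha(p,q)=\int\varphi\,p^\alpha q^{1-\alpha}\,\mathrm d\mu$; $D^{\mathrm w}_{B,\alpha}(p,q)=-\ln\rho^{\mathrm w}_\alpha(p,q)$; $D^{\mathrm w}_C(p,q)=\max_{\alpha\in[0,1]}D^{\mathrm w}_{B,\alpha}(p,q)$. Weighted Bregman divergence: $B^{\mathrm w}_{\varphi,F}(\theta,\theta')=E_\varphi(\theta')\big[F(\theta)-F(\theta')-(\theta-\theta')^{\mathrm T}\nabla\hat F(\theta')\big]$. *)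

theory Defs
  imports "HOL-Analysis.Analysis"
begin

definition expfam :: "('x \<Rightarrow> 'd::euclidean_space) \<Rightarrow> ('x \<Rightarrow> real) \<Rightarrow> ('d \<Rightarrow> real)
    \<Rightarrow> 'd \<Rightarrow> 'x \<Rightarrow> real" where
  "expfam t k F \<theta> x = exp (inner \<theta> (t x) - F \<theta> + k x)"

definition E_w :: "'x measure \<Rightarrow> ('x \<Rightarrow> real) \<Rightarrow> ('x \<Rightarrow> real) \<Rightarrow> real" where
  "E_w M \<phi> p = (\<integral>x. \<phi> x * p x \<partial>M)"

definition rho_w :: "'x measure \<Rightarrow> ('x \<Rightarrow> real) \<Rightarrow> real \<Rightarrow> ('x \<Rightarrow> real) \<Rightarrow> ('x \<Rightarrow> real) \<Rightarrow> real" where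
  "rho_w M \<phi> \<alpha> p q = (\<integral>x. \<phi> x * p x powr \<alpha> * q x powr (1 - \<alpha>) \<partial>M)"

definition DB_w :: "'x measure \<Rightarrow> ('x \<Rightarrow> real) \<Rightarrow> real \<Rightarrow> ('x \<Rightarrow> real) \<Rightarrow> ('x \<Rightarrow> real) \<Rightarrow> real" where
  "DB_w M \<phi> \<alpha> p q = - ln (rho_w M \<phi> \<alpha> p q)"

definition DC_w :: "'x measure \<Rightarrow> ('x \<Rightarrow> real) \<Rightarrow> ('x \<Rightarrow> real) \<Rightarrow> ('x \<Rightarrow> real) \<Rightarrow> real" where
  "DC_w M \<phi> p q = (SUP \<alpha>\<in>{0..1}. DB_w M \<phi> \<alpha> p q)"

definition Fhat :: "'x measure \<Rightarrow> ('x \<Rightarrow> real) \<Rightarrow> ('x \<Rightarrow> 'd::euclidean_space) \<Rightarrow> ('x \<Rightarrow> real)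
    \<Rightarrow> 'd \<Rightarrow> real" where
  "Fhat M \<phi> t k \<theta> = ln (\<integral>x. \<phi> x * exp (inner \<theta> (t x) + k x) \<partial>M)"

definition grad :: "('d::euclidean_space \<Rightarrow> real) \<Rightarrow> 'd \<Rightarrow> 'd" where
  "grad f x = (THE D. GDERIV f x :> D)"

definition Breg_w :: "'x measure \<Rightarrow> ('x \<Rightarrow> real) \<Rightarrow> ('x \<Rightarrow> 'd::euclidean_space) \<Rightarrow> ('x \<Rightarrow> real)
    \<Rightarrow> ('d \<Rightarrow> real) \<Rightarrow> 'd \<Rightarrow> 'd \<Rightarrow> real" where
  "Breg_w M \<phi> t k F \<theta> \<theta>' = E_w M \<phi> (expfam t k F \<theta>') *
     (F \<theta> - F \<theta>' - inner (\<theta> - \<theta>') (grad (Fhat M \<phi> t k) \<theta>'))"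

end

theory Submission
  imports Defs
begin

text \<open>On the segment \<theta>_\<alpha> = \<alpha> \<theta>1 + (1 - \<alpha>) \<theta>2 the geometric mixture p1^\<alpha> p2^(1 - \<alpha>)
  equals exp (F \<theta>_\<alpha> - \<alpha> F \<theta>1 - (1 - \<alpha>) F \<theta>2) p_\<theta>_\<alpha>, hence
  D_B,\<alpha> = \<alpha> F \<theta>1 + (1 - \<alpha>) F \<theta>2 - Fhat \<theta>_\<alpha>. At an interior maximiser its derivative in \<alpha>
  vanishes: F \<theta>1 - F \<theta>2 = (\<theta>1 - \<theta>2) \<bullet> \<nabla>Fhat \<theta>_\<alpha>. Substituting this into the two weighted
  Bregman divergences turns both brackets into \<alpha> F \<theta>1 + (1 - \<alpha>) F \<theta>2 - F \<theta>_\<alpha>, and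
  Fhat = F + ln E_\<phi> converts this common value into the Chernoff information.\<close>

lemma has_derivative_grad:
  fixes f :: "'a::euclidean_space \<Rightarrow> real"
  assumes "f differentiable (at x)"
  shows "(f has_derivative (\<lambda>h. inner h (grad f x))) (at x)"
proof -
  obtain f' where f': "(f has_derivative f') (at x)"
    using assms unfolding differentiable_def by blast
  define D where "D = adjoint f' 1"
  have f'_eq: "f' = (\<lambda>h. inner h D)"
    using adjoint_works[OF has_derivative_linear[OF f']] unfolding D_def by (auto simp: fun_eq_iff)
  have gderiv: "GDERIV f x :> D"
    unfolding gderiv_def using f' f'_eq by simp
  have "grad f x = D"
    unfolding grad_def
  proof (rule the_equality[of "\<lambda>D. GDERIV f x :> D", OF gderiv])
    fix D' assume "GDERIV f x :> D'"
    then have "(\<lambda>h. inner h D') = (\<lambda>h. inner h D)"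
      using gderiv unfolding gderiv_def by (rule has_derivative_unique)
    then show "D' = D" by (metis vector_eq_ldot)
  qed
  then show ?thesis using f' f'_eq by simp
qed

lemma interior_max_on_segment_imp_grad:
  fixes f :: "'a::euclidean_space \<Rightarrow> real"
  assumes diff: "f differentiable (at (\<alpha> *\<^sub>R x + (1 - \<alpha>) *\<^sub>R y))"
    and \<alpha>: "\<alpha> \<in> {0<..<1}"
    and max: "\<And>\<beta>. \<beta> \<in> {0..1} \<Longrightarrow>
      \<beta> * a + (1 - \<beta>) * b - f (\<beta> *\<^sub>R x + (1 - \<beta>) *\<^sub>R y)
        \<le> \<alpha> * a + (1 - \<alpha>) * b - f (\<alpha> *\<^sub>R x + (1 - \<alpha>) *\<^sub>R y)"
  shows "a - b = inner (x - y) (grad f (\<alpha> *\<^sub>R x + (1 - \<alpha>) *\<^sub>R y))"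
proof -
  define D where "D = grad f (\<alpha> *\<^sub>R x + (1 - \<alpha>) *\<^sub>R y)"
  define g where "g = (\<lambda>\<beta>. \<beta> * a + (1 - \<beta>) * b - f (\<beta> *\<^sub>R x + (1 - \<beta>) *\<^sub>R y))"
  have segment: "((\<lambda>\<beta>. \<beta> *\<^sub>R x + (1 - \<beta>) *\<^sub>R y) has_derivative (\<lambda>h. h *\<^sub>R (x - y))) (at \<alpha>)"
    by (auto intro!: derivative_eq_intros simp: algebra_simps)
  have "((\<lambda>\<beta>. f (\<beta> *\<^sub>R x + (1 - \<beta>) *\<^sub>R y)) has_derivative (\<lambda>h. inner (h *\<^sub>R (x - y)) D)) (at \<alpha>)"
    using has_derivative_compose[OF segment has_derivative_grad[OF diff]]
    unfolding D_def by (simp add: o_def)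
  then have "(g has_derivative (\<lambda>h. h * a - h * b - inner (h *\<^sub>R (x - y)) D)) (at \<alpha>)"
    unfolding g_def by (auto intro!: derivative_eq_intros)
  then have deriv: "(g has_field_derivative (a - b - inner (x - y) D)) (at \<alpha>)"
    by (rule has_derivative_imp_has_field_derivative) (simp add: algebra_simps)
  have local_max: "\<forall>\<beta>. \<bar>\<alpha> - \<beta>\<bar> < min \<alpha> (1 - \<alpha>) \<longrightarrow> g \<beta> \<le> g \<alpha>"
  proof (intro allI impI)
    fix \<beta> assume "\<bar>\<alpha> - \<beta>\<bar> < min \<alpha> (1 - \<alpha>)"
    then have "\<beta> \<in> {0..1}" by auto
    then show "g \<beta> \<le> g \<alpha>" unfolding g_def by (rule max)
  qed
  have "a - b - inner (x - y) D = 0"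
    using \<alpha> by (intro DERIV_local_max[OF deriv _ local_max]) auto
  then show ?thesis unfolding D_def by simp
qed

lemma DC_w_eq_DB_w_max:
  assumes "\<alpha> \<in> {0..1}" and "\<And>\<beta>. \<beta> \<in> {0..1} \<Longrightarrow> DB_w M \<phi> \<beta> p q \<le> DB_w M \<phi> \<alpha> p q"
  shows "DC_w M \<phi> p q = DB_w M \<phi> \<alpha> p q"
  unfolding DC_w_def by (rule cSup_eq_maximum) (use assms in auto)

lemma Fhat_eq_F_plus_ln_E_w:
  assumes "E_w M \<phi> (expfam t k F \<theta>) > 0"
  shows "Fhat M \<phi> t k \<theta> = F \<theta> + ln (E_w M \<phi> (expfam t k F \<theta>))"
proof -
  define I where "I = (\<integral>x. \<phi> x * exp (inner \<theta> (t x) + k x) \<partial>M)"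
  have "(\<lambda>x. \<phi> x * expfam t k F \<theta> x) = (\<lambda>x. exp (- F \<theta>) * (\<phi> x * exp (inner \<theta> (t x) + k x)))"
    by (simp add: fun_eq_iff expfam_def exp_add exp_diff exp_minus field_simps)
  then have E: "E_w M \<phi> (expfam t k F \<theta>) = exp (- F \<theta>) * I"
    unfolding E_w_def I_def by simp
  with assms have "I > 0" by (simp add: zero_less_mult_iff)
  then show ?thesis unfolding Fhat_def I_def[symmetric] E by (simp add: ln_mult)
qed

lemma rho_w_expfam:
  "rho_w M \<phi> \<alpha> (expfam t k F \<theta>1) (expfam t k F \<theta>2)
     = exp (F (\<alpha> *\<^sub>R \<theta>1 + (1 - \<alpha>) *\<^sub>R \<theta>2) - (\<alpha> * F \<theta>1 + (1 - \<alpha>) * F \<theta>2))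
       * E_w M \<phi> (expfam t k F (\<alpha> *\<^sub>R \<theta>1 + (1 - \<alpha>) *\<^sub>R \<theta>2))"
proof -
  define \<theta> where "\<theta> = \<alpha> *\<^sub>R \<theta>1 + (1 - \<alpha>) *\<^sub>R \<theta>2"
  define c where "c = exp (F \<theta> - (\<alpha> * F \<theta>1 + (1 - \<alpha>) * F \<theta>2))"
  have "expfam t k F \<theta>1 x powr \<alpha> * expfam t k F \<theta>2 x powr (1 - \<alpha>) = c * expfam t k F \<theta> x" for x
  proof -
    have "expfam t k F \<theta>1 x powr \<alpha> * expfam t k F \<theta>2 x powr (1 - \<alpha>)
        = exp (\<alpha> * (inner \<theta>1 (t x) - F \<theta>1 + k x) + (1 - \<alpha>) * (inner \<theta>2 (t x) - F \<theta>2 + k x))"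
      by (simp add: expfam_def powr_def mult_exp_exp)
    also have "\<dots> = c * expfam t k F \<theta> x"
      by (simp add: c_def expfam_def mult_exp_exp \<theta>_def inner_add_left algebra_simps)
    finally show ?thesis .
  qed
  then have "rho_w M \<phi> \<alpha> (expfam t k F \<theta>1) (expfam t k F \<theta>2) = (\<integral>x. c * (\<phi> x * expfam t k F \<theta> x) \<partial>M)"
    unfolding rho_w_def by (simp add: mult.assoc mult.left_commute)
  then show ?thesis unfolding E_w_def c_def \<theta>_def by simp
qed

lemma DB_w_expfam:
  assumes "E_w M \<phi> (expfam t k F (\<alpha> *\<^sub>R \<theta>1 + (1 - \<alpha>) *\<^sub>R \<theta>2)) > 0"
  shows "DB_w M \<phi> \<alpha> (expfam t k F \<theta>1) (expfam t k F \<theta>2)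
           = \<alpha> * F \<theta>1 + (1 - \<alpha>) * F \<theta>2 - Fhat M \<phi> t k (\<alpha> *\<^sub>R \<theta>1 + (1 - \<alpha>) *\<^sub>R \<theta>2)"
  using assms by (simp add: DB_w_def rho_w_expfam ln_mult Fhat_eq_F_plus_ln_E_w)

lemma Breg_w_stationary:
  assumes stationary: "F \<theta>1 - F \<theta>2 = inner (\<theta>1 - \<theta>2) (grad (Fhat M \<phi> t k) \<theta>)"
    and \<theta>: "\<theta> = \<alpha> *\<^sub>R \<theta>1 + (1 - \<alpha>) *\<^sub>R \<theta>2"
  shows "Breg_w M \<phi> t k F \<theta>1 \<theta>
           = E_w M \<phi> (expfam t k F \<theta>) * (\<alpha> * F \<theta>1 + (1 - \<alpha>) * F \<theta>2 - F \<theta>)"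
proof -
  have "\<theta>1 - \<theta> = (1 - \<alpha>) *\<^sub>R (\<theta>1 - \<theta>2)"
    unfolding \<theta> by (simp add: algebra_simps)
  then have "inner (\<theta>1 - \<theta>) (grad (Fhat M \<phi> t k) \<theta>) = (1 - \<alpha>) * (F \<theta>1 - F \<theta>2)"
    by (simp add: stationary)
  then have "F \<theta>1 - F \<theta> - inner (\<theta>1 - \<theta>) (grad (Fhat M \<phi> t k) \<theta>)
      = \<alpha> * F \<theta>1 + (1 - \<alpha>) * F \<theta>2 - F \<theta>"
    by (simp only:) (simp add: algebra_simps)
  then show ?thesis unfolding Breg_w_def by simp
qed

theorem proposition3p6:
  fixes M :: "'x measure" and \<phi> :: "'x \<Rightarrow> real"
    and t :: "'x \<Rightarrow> 'd::euclidean_space" and k :: "'x \<Rightarrow> real"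
    and F :: "'d \<Rightarrow> real" and \<Theta> :: "'d set"
    and \<theta>1 \<theta>2 :: 'd and \<alpha>s :: real
  assumes sf: "sigma_finite_measure M"
    and \<phi>_meas: "\<phi> \<in> borel_measurable M" and \<phi>_nonneg: "\<And>x. x \<in> space M \<Longrightarrow> \<phi> x \<ge> 0"
    and t_meas: "t \<in> borel_measurable M" and k_meas: "k \<in> borel_measurable M"
    and \<Theta>_open: "open \<Theta>" and \<Theta>_convex: "convex \<Theta>"
    and fam_int: "\<And>\<theta>. \<theta> \<in> \<Theta> \<Longrightarrow> integrable M (\<lambda>x. exp (inner \<theta> (t x) + k x))"
    and F_def: "\<And>\<theta>. \<theta> \<in> \<Theta> \<Longrightarrow> F \<theta> = ln (\<integral>x. exp (inner \<theta> (t x) + k x) \<partial>M)"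
    and E_int: "\<And>\<theta>. \<theta> \<in> \<Theta> \<Longrightarrow> integrable M (\<lambda>x. \<phi> x * expfam t k F \<theta> x)"
    and E_pos: "\<And>\<theta>. \<theta> \<in> \<Theta> \<Longrightarrow> E_w M \<phi> (expfam t k F \<theta>) > 0"
    and Fhat_diff: "\<And>\<theta>. \<theta> \<in> \<Theta> \<Longrightarrow> Fhat M \<phi> t k differentiable (at \<theta>)"
    and \<theta>1: "\<theta>1 \<in> \<Theta>" and \<theta>2: "\<theta>2 \<in> \<Theta>"
    and \<alpha>s_in: "\<alpha>s \<in> {0<..<1}"
    and \<alpha>s_max: "\<And>\<alpha>. \<alpha> \<in> {0..1} \<Longrightarrow>
        DB_w M \<phi> \<alpha> (expfam t k F \<theta>1) (expfam t k F \<theta>2)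
          \<le> DB_w M \<phi> \<alpha>s (expfam t k F \<theta>1) (expfam t k F \<theta>2)"
    and \<alpha>s_unique: "\<And>\<alpha>. \<alpha> \<in> {0..1} \<Longrightarrow>
        DB_w M \<phi> \<alpha> (expfam t k F \<theta>1) (expfam t k F \<theta>2)
          = DB_w M \<phi> \<alpha>s (expfam t k F \<theta>1) (expfam t k F \<theta>2) \<Longrightarrow> \<alpha> = \<alpha>s"
  shows
    "let p1 = expfam t k F \<theta>1; p2 = expfam t k F \<theta>2;
         \<theta>a = \<alpha>s *\<^sub>R \<theta>1 + (1 - \<alpha>s) *\<^sub>R \<theta>2;
         Ea = E_w M \<phi> (expfam t k F \<theta>a);
         B1 = Breg_w M \<phi> t k F \<theta>1 \<theta>a; B2 = Breg_w M \<phi> t k F \<theta>2 \<theta>a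
     in DC_w M \<phi> p1 p2 = DB_w M \<phi> \<alpha>s p1 p2
      \<and> DB_w M \<phi> \<alpha>s p1 p2 = \<alpha>s * F \<theta>1 + (1 - \<alpha>s) * F \<theta>2 - Fhat M \<phi> t k \<theta>a
      \<and> B1 = B2
      \<and> DC_w M \<phi> p1 p2 = B1 / Ea - ln Ea
      \<and> DC_w M \<phi> p1 p2 = B2 / Ea - ln Ea"
proof -
  define \<theta>a where "\<theta>a = \<alpha>s *\<^sub>R \<theta>1 + (1 - \<alpha>s) *\<^sub>R \<theta>2"
  have segment_in: "\<beta> *\<^sub>R \<theta>1 + (1 - \<beta>) *\<^sub>R \<theta>2 \<in> \<Theta>" if "\<beta> \<in> {0..1}" for \<beta>
    using \<Theta>_convex \<theta>1 \<theta>2 that unfolding convex_def by auto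
  have \<alpha>s_01: "\<alpha>s \<in> {0..1}" and \<theta>a_in: "\<theta>a \<in> \<Theta>"
    using \<alpha>s_in segment_in[of \<alpha>s] unfolding \<theta>a_def by auto
  note DB = DB_w_expfam[OF E_pos[OF segment_in]]
  have stationary: "F \<theta>1 - F \<theta>2 = inner (\<theta>1 - \<theta>2) (grad (Fhat M \<phi> t k) \<theta>a)"
    unfolding \<theta>a_def
    using Fhat_diff[OF \<theta>a_in, unfolded \<theta>a_def] \<alpha>s_in \<alpha>s_max
    by (intro interior_max_on_segment_imp_grad) (auto simp: DB \<alpha>s_01)
  have B1: "Breg_w M \<phi> t k F \<theta>1 \<theta>a
      = E_w M \<phi> (expfam t k F \<theta>a) * (\<alpha>s * F \<theta>1 + (1 - \<alpha>s) * F \<theta>2 - F \<theta>a)"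
    using stationary \<theta>a_def by (rule Breg_w_stationary)
  have "Breg_w M \<phi> t k F \<theta>2 \<theta>a
      = E_w M \<phi> (expfam t k F \<theta>a) * ((1 - \<alpha>s) * F \<theta>2 + (1 - (1 - \<alpha>s)) * F \<theta>1 - F \<theta>a)"
  proof (rule Breg_w_stationary)
    show "F \<theta>2 - F \<theta>1 = inner (\<theta>2 - \<theta>1) (grad (Fhat M \<phi> t k) \<theta>a)"
      using stationary by (metis inner_minus_left minus_diff_eq)
    show "\<theta>a = (1 - \<alpha>s) *\<^sub>R \<theta>2 + (1 - (1 - \<alpha>s)) *\<^sub>R \<theta>1"
      unfolding \<theta>a_def by (simp add: algebra_simps)
  qed
  then have B2: "Breg_w M \<phi> t k F \<theta>2 \<theta>a = Breg_w M \<phi> t k F \<theta>1 \<theta>a"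
    by (simp add: B1 algebra_simps)
  show ?thesis
    using DC_w_eq_DB_w_max[OF \<alpha>s_01 \<alpha>s_max] DB[OF \<alpha>s_01] B1 B2 E_pos[OF \<theta>a_in]
      Fhat_eq_F_plus_ln_E_w[OF E_pos[OF \<theta>a_in]]
    by (simp add: Let_def \<theta>a_def[symmetric])
qed

end
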